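(* Let $U\subset\mathbb{R}^n$ be a bounded domain with smooth boundary and let $(u_1,u_2)\in C(\overline U)^2$ be a viscosity solution of the system (S) in $U$. Then $u_1$ and $u_2$ are locally Lipschitz continuous in $U$.
   Context: For $\varphi\in C^2$ near $x$, set $\Delta_\infty\varphi(x)=|D\varphi(x)|^{-2}\sum_{k,l=1}^n\varphi_{x_k}\varphi_{x_l}\varphi_{x_kx_l}(x)$ when $D\varphi(x)\neq0$. Define $\Delta_\infty^+\varphi(x)=\Delta_\infty\varphi(x)$ if $D\varphi(x)\ne0$ and $\Delta_\infty^+\varphi(x)=\max\{D^2\varphi(x)v\cdot v: v\in\mathbb{S}^{n-1}\}$ if $D\varphi(x)=0$; define $\Delta_\infty^-\varphi(x)$ in the same way with $\min$ in place of $\max$. The system (S) on an open set $\Omega$ is: $-\Delta_\infty u_1+u_1-u_2=0$ and $-\Delta_\infty u_2+u_2-u_1=0$ in $\Omega$. A pair $(u_1,u_2)$ of upper semicontinuous functions on $\Omega$ is a viscosity subsolution of (S) in $\Omega$ if for each $i\in\{1,2\}$, $j=3-i$, and each $\varphi\in C^2(\Omega)$ such that $u_i-\varphi$ has a local maximum at $x_0\in\Omega$, one has $-\Delta_\infty^+\varphi(x_0)+u_i(x_0)-u_j(x_0)\le0$. A pair of lower semicontinuous functions on $\Omega$ is a viscosity supersolution if for each $i$, $j=3-i$, and each $\varphi\in C^2(\Omega)$ such that $u_i-\varphi$ has a local minimum at $x_0\in\Omega$, one has $-\Delta_\infty^-\varphi(x_0)+u_i(x_0)-u_j(x_0)\ge0$.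 A viscosity solution is a pair that is both a subsolution and a supersolution. *)

theory Defs
  imports "HOL-Analysis.Analysis"
begin

fun Ck :: "nat \<Rightarrow> ('a::euclidean_space \<Rightarrow> real) \<Rightarrow> 'a set \<Rightarrow> bool" where
  "Ck 0 f S = continuous_on S f"
| "Ck (Suc k) f S = (continuous_on S f \<and> (\<forall>x\<in>S. f differentiable (at x)) \<and>
      (\<forall>b\<in>Basis. Ck k (\<lambda>x. frechet_derivative f (at x) b) S))"

definition smooth_on :: "('a::euclidean_space \<Rightarrow> real) \<Rightarrow> 'a set \<Rightarrow> bool" where
  "smooth_on f S \<longleftrightarrow> (\<forall>k. Ck k f S)"

definition smooth_boundary :: "'a::euclidean_space set \<Rightarrow> bool" where
  "smooth_boundary U \<longleftrightarrow> (\<forall>p\<in>frontier U. \<exists>r>0. \<exists>\<rho>. smooth_on \<rho> (ball p r) \<and>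
      (\<forall>x\<in>ball p r. x \<in> U \<longleftrightarrow> \<rho> x < 0) \<and> frechet_derivative \<rho> (at p) \<noteq> (\<lambda>h. 0))"

definition grad :: "('a::euclidean_space \<Rightarrow> real) \<Rightarrow> 'a \<Rightarrow> 'a" where
  "grad \<phi> x = (\<Sum>b\<in>Basis. frechet_derivative \<phi> (at x) b *\<^sub>R b)"

definition hess :: "('a::euclidean_space \<Rightarrow> real) \<Rightarrow> 'a \<Rightarrow> 'a \<Rightarrow> 'a \<Rightarrow> real" where
  "hess \<phi> x v w = frechet_derivative (\<lambda>y. frechet_derivative \<phi> (at y) v) (at x) w"

definition inf_lap :: "('a::euclidean_space \<Rightarrow> real) \<Rightarrow> 'a \<Rightarrow> real" where
  "inf_lap \<phi> x = (\<Sum>k\<in>Basis. \<Sum>l\<in>Basis.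
      frechet_derivative \<phi> (at x) k * frechet_derivative \<phi> (at x) l * hess \<phi> x k l)
      / (norm (grad \<phi> x))\<^sup>2"

definition inf_lap_plus :: "('a::euclidean_space \<Rightarrow> real) \<Rightarrow> 'a \<Rightarrow> real" where
  "inf_lap_plus \<phi> x = (if grad \<phi> x \<noteq> 0 then inf_lap \<phi> x
      else (SUP v\<in>sphere 0 1. hess \<phi> x v v))"

definition inf_lap_minus :: "('a::euclidean_space \<Rightarrow> real) \<Rightarrow> 'a \<Rightarrow> real" where
  "inf_lap_minus \<phi> x = (if grad \<phi> x \<noteq> 0 then inf_lap \<phi> x
      else (INF v\<in>sphere 0 1. hess \<phi> x v v))"

definition usc_on :: "'a::metric_space set \<Rightarrow> ('a \<Rightarrow> real) \<Rightarrow> bool" where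
  "usc_on \<Omega> u \<longleftrightarrow> (\<forall>x\<in>\<Omega>. \<forall>e>0. \<forall>\<^sub>F y in at x within \<Omega>. u y < u x + e)"

definition lsc_on :: "'a::metric_space set \<Rightarrow> ('a \<Rightarrow> real) \<Rightarrow> bool" where
  "lsc_on \<Omega> u \<longleftrightarrow> (\<forall>x\<in>\<Omega>. \<forall>e>0. \<forall>\<^sub>F y in at x within \<Omega>. u x - e < u y)"

definition visc_sub_comp :: "'a::euclidean_space set \<Rightarrow> ('a \<Rightarrow> real) \<Rightarrow> ('a \<Rightarrow> real) \<Rightarrow> bool" where
  "visc_sub_comp \<Omega> ui uj \<longleftrightarrow> (\<forall>\<phi> x0. Ck 2 \<phi> \<Omega> \<longrightarrow> x0 \<in> \<Omega> \<longrightarrow>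
      (\<exists>r>0. \<forall>y\<in>ball x0 r \<inter> \<Omega>. ui y - \<phi> y \<le> ui x0 - \<phi> x0) \<longrightarrow>
      - inf_lap_plus \<phi> x0 + ui x0 - uj x0 \<le> 0)"

definition visc_super_comp :: "'a::euclidean_space set \<Rightarrow> ('a \<Rightarrow> real) \<Rightarrow> ('a \<Rightarrow> real) \<Rightarrow> bool" where
  "visc_super_comp \<Omega> ui uj \<longleftrightarrow> (\<forall>\<phi> x0. Ck 2 \<phi> \<Omega> \<longrightarrow> x0 \<in> \<Omega> \<longrightarrow>
      (\<exists>r>0. \<forall>y\<in>ball x0 r \<inter> \<Omega>. ui y - \<phi> y \<ge> ui x0 - \<phi> x0) \<longrightarrow>
      - inf_lap_minus \<phi> x0 + ui x0 - uj x0 \<ge> 0)"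

definition visc_subsolution :: "'a::euclidean_space set \<Rightarrow> ('a \<Rightarrow> real) \<Rightarrow> ('a \<Rightarrow> real) \<Rightarrow> bool" where
  "visc_subsolution \<Omega> u1 u2 \<longleftrightarrow> usc_on \<Omega> u1 \<and> usc_on \<Omega> u2 \<and>
      visc_sub_comp \<Omega> u1 u2 \<and> visc_sub_comp \<Omega> u2 u1"

definition visc_supersolution :: "'a::euclidean_space set \<Rightarrow> ('a \<Rightarrow> real) \<Rightarrow> ('a \<Rightarrow> real) \<Rightarrow> bool" where
  "visc_supersolution \<Omega> u1 u2 \<longleftrightarrow> lsc_on \<Omega> u1 \<and> lsc_on \<Omega> u2 \<and>
      visc_super_comp \<Omega> u1 u2 \<and> visc_super_comp \<Omega> u2 u1"

definition visc_solution :: "'a::euclidean_space set \<Rightarrow> ('a \<Rightarrow> real) \<Rightarrow> ('a \<Rightarrow> real) \<Rightarrow> bool" where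
  "visc_solution \<Omega> u1 u2 \<longleftrightarrow> visc_subsolution \<Omega> u1 u2 \<and> visc_supersolution \<Omega> u1 u2"

definition locally_lipschitz_in :: "'a::metric_space set \<Rightarrow> ('a \<Rightarrow> real) \<Rightarrow> bool" where
  "locally_lipschitz_in U u \<longleftrightarrow> (\<forall>x\<in>U. \<exists>r>0. \<exists>L. ball x r \<subseteq> U \<and> L-lipschitz_on (ball x r) u)"

end

theory Submission
  imports Defs
begin

(* Let u be a
   component, v the other one, with |u| <= M and u - v < 2c on U (true for c = M + 1
   since both components are bounded on the compact closure of U).  Compare u from
   below with the cone-paraboloid  w(y) = K - L|y - x0| + c|y - x0|^2 : if u - w attains
   a local minimum at a point ys \<noteq> x0 with 2c|ys - x0| < L, then w can be replaced,
   near ys, by a quadratic polynomial psi lying below w and touching it at ys; the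
   infinity Laplacian of psi at ys is exactly 2c, so the supersolution inequality
   gives u(ys) - v(ys) >= 2c, a contradiction.  A maximum argument on a ball of radius R
   then shows u(x0) - u(y) <= L |x0 - y| on that ball for L large, which yields local
   Lipschitz continuity. *)

section \<open>Quadratic test functions\<close>

(* q(z) = A + L<e,z-x0> + g|z-x0|^2 + d<e,z-x0>^2: smooth functions whose infinity
   Laplacian can be computed explicitly; they serve as test functions. *)
definition quad :: "'a::euclidean_space \<Rightarrow> real \<Rightarrow> 'a \<Rightarrow> real \<Rightarrow> real \<Rightarrow> real \<Rightarrow> 'a \<Rightarrow> real" where
  "quad x0 A e L g d z =
     A + L * (e \<bullet> (z - x0)) + g * ((z - x0) \<bullet> (z - x0)) + d * ((e \<bullet> (z - x0)) * (e \<bullet> (z - x0)))"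

lemma quad_has_derivative:
  "(quad x0 A e L g d has_derivative
     (\<lambda>h. L * (e \<bullet> h) + 2 * g * ((z - x0) \<bullet> h) + 2 * d * (e \<bullet> (z - x0)) * (e \<bullet> h))) (at z)"
  unfolding quad_def
  by (auto intro!: derivative_eq_intros simp: fun_eq_iff algebra_simps inner_commute)

lemma quad_derivative:
  "frechet_derivative (quad x0 A e L g d) (at z) =
     (\<lambda>h. L * (e \<bullet> h) + 2 * g * ((z - x0) \<bullet> h) + 2 * d * (e \<bullet> (z - x0)) * (e \<bullet> h))"
  by (rule frechet_derivative_at[OF quad_has_derivative, symmetric])

lemma quad_partial_has_derivative:
  "((\<lambda>z. L * (e \<bullet> b) + 2 * g * ((z - x0) \<bullet> b) + 2 * d * (e \<bullet> (z - x0)) * (e \<bullet> b))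
     has_derivative (\<lambda>h. 2 * g * (h \<bullet> b) + 2 * d * (e \<bullet> h) * (e \<bullet> b))) (at z)"
  by (auto intro!: derivative_eq_intros simp: fun_eq_iff algebra_simps)

lemma quad_second_derivative:
  "frechet_derivative (\<lambda>z. frechet_derivative (quad x0 A e L g d) (at z) b) (at z) =
     (\<lambda>h. 2 * g * (h \<bullet> b) + 2 * d * (e \<bullet> h) * (e \<bullet> b))"
  unfolding quad_derivative by (rule frechet_derivative_at[OF quad_partial_has_derivative, symmetric])

lemma quad_C2: "Ck 2 (quad x0 A e L g d) S"
proof -
  have "continuous_on S (quad x0 A e L g d)"
    unfolding quad_def by (intro continuous_intros)
  moreover have "quad x0 A e L g d differentiable (at x)" for x
    using differentiableI[OF quad_has_derivative] .
  moreover have "continuous_on S (\<lambda>x. frechet_derivative (quad x0 A e L g d) (at x) b)" for b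
    unfolding quad_derivative by (intro continuous_intros)
  moreover have "(\<lambda>x. frechet_derivative (quad x0 A e L g d) (at x) b) differentiable (at x)" for b x
    unfolding quad_derivative using differentiableI[OF quad_partial_has_derivative] .
  moreover have "continuous_on S (\<lambda>x. frechet_derivative
                    (\<lambda>x. frechet_derivative (quad x0 A e L g d) (at x) b) (at x) b')" for b b'
    unfolding quad_second_derivative by simp
  ultimately show ?thesis
    by (simp add: numeral_2_eq_2)
qed

lemma quad_hess: "hess (quad x0 A e L g d) z v w = 2 * g * (w \<bullet> v) + 2 * d * (e \<bullet> w) * (e \<bullet> v)"
  unfolding hess_def quad_second_derivative by simp

lemma quad_grad:
  "grad (quad x0 A e L g d) z = L *\<^sub>R e + (2 * g) *\<^sub>R (z - x0) + (2 * d * (e \<bullet> (z - x0))) *\<^sub>R e"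
  (is "_ = ?G")
proof -
  have "frechet_derivative (quad x0 A e L g d) (at z) b = ?G \<bullet> b" for b
    unfolding quad_derivative by (simp add: inner_add_left)
  hence "grad (quad x0 A e L g d) z = (\<Sum>b\<in>Basis. (?G \<bullet> b) *\<^sub>R b)"
    unfolding grad_def by simp
  also have "\<dots> = ?G" by (rule euclidean_representation)
  finally show ?thesis .
qed

lemma quad_inf_lap_minus:
  assumes e: "norm e = 1" and G: "grad (quad x0 A e L g d) z = s *\<^sub>R e" and s: "s \<noteq> 0"
  shows "inf_lap_minus (quad x0 A e L g d) z = 2 * g + 2 * d"
proof -
  let ?q = "quad x0 A e L g d"
  have ee: "e \<bullet> e = 1" using e by (simp add: dot_square_norm)
  have e_coord_sum: "(\<Sum>l\<in>Basis. (e \<bullet> l) * (k \<bullet> l)) = e \<bullet> k" for k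
    by (simp add: euclidean_inner[of e k])
  have e_norm_sum: "(\<Sum>k\<in>Basis. (e \<bullet> k) * (e \<bullet> k)) = 1"
    using ee by (simp add: euclidean_inner[of e e])
  have partial: "frechet_derivative ?q (at z) b = s * (e \<bullet> b)" for b
  proof -
    have "frechet_derivative ?q (at z) b = grad ?q z \<bullet> b"
      unfolding quad_grad quad_derivative by (simp add: inner_add_left)
    thus ?thesis unfolding G by simp
  qed
  have row: "(\<Sum>l\<in>Basis. frechet_derivative ?q (at z) k * frechet_derivative ?q (at z) l * hess ?q z k l)
      = s\<^sup>2 * (2 * g + 2 * d) * ((e \<bullet> k) * (e \<bullet> k))" for k
  proof -
    have "(\<Sum>l\<in>Basis. frechet_derivative ?q (at z) k * frechet_derivative ?q (at z) l * hess ?q z k l)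
        = (\<Sum>l\<in>Basis. (s\<^sup>2 * 2 * g) * (e \<bullet> k) * ((e \<bullet> l) * (k \<bullet> l))
             + (s\<^sup>2 * 2 * d) * (e \<bullet> k) * (e \<bullet> k) * ((e \<bullet> l) * (e \<bullet> l)))"
      unfolding partial quad_hess
      by (intro sum.cong refl) (simp add: inner_commute power2_eq_square algebra_simps)
    also have "\<dots> = (s\<^sup>2 * 2 * g) * (e \<bullet> k) * (e \<bullet> k) + (s\<^sup>2 * 2 * d) * (e \<bullet> k) * (e \<bullet> k)"
      by (simp only: sum.distrib sum_distrib_left[symmetric] e_coord_sum ee mult_1_right)
    finally show ?thesis by (simp add: algebra_simps)
  qed
  have numerator:
    "(\<Sum>k\<in>Basis. \<Sum>l\<in>Basis. frechet_derivative ?q (at z) k * frechet_derivative ?q (at z) l * hess ?q z k l)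
      = s\<^sup>2 * (2 * g + 2 * d)"
    by (simp only: row sum_distrib_left[symmetric] e_norm_sum mult_1_right)
  have "(norm (grad ?q z))\<^sup>2 = s\<^sup>2" and "grad ?q z \<noteq> 0"
    using e G s by auto
  thus ?thesis
    unfolding inf_lap_minus_def inf_lap_def numerator using s by simp
qed

section \<open>A smooth barrier below the cone\<close>

definition cone_paraboloid :: "'a::real_normed_vector \<Rightarrow> real \<Rightarrow> real \<Rightarrow> real \<Rightarrow> 'a \<Rightarrow> real" where
  "cone_paraboloid x0 K L c z = K - L * norm (z - x0) + c * (norm (z - x0))\<^sup>2"

(* Scalar core of the barrier: for 0 < t <= 2a and a <= n one has n <= a + (n^2 - a^2)/t,
   i.e. |z - x0| is bounded by a quadratic in a = <e, z - x0> and n = |z - x0|. *)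
lemma norm_le_quadratic_bound:
  fixes a n t :: real
  assumes "t > 0" "2 * a \<ge> t" "a \<le> n"
  shows "n \<le> a + (n\<^sup>2 - a\<^sup>2) / t"
proof -
  have "(n - a) * t \<le> (n - a) * (n + a)"
    using assms by (intro mult_left_mono) auto
  hence "(n - a) * t \<le> n\<^sup>2 - a\<^sup>2" by (simp add: algebra_simps power2_eq_square)
  hence "n - a \<le> (n\<^sup>2 - a\<^sup>2) / t" using assms by (simp add: pos_le_divide_eq)
  thus ?thesis by simp
qed

(* Away from its vertex the cone admits a quadratic lower barrier: with t = |ys - x0| > 0
   and e = (ys - x0)/t, the quadratic  q = quad x0 K e (-L) (c - L/t) (L/t)  touches w at ys
   and stays below w on the ball of radius t/2 around ys (for L >= 0). *)
lemma quad_touches_cone_at: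
  assumes "t = norm (ys - x0)" "t > 0" "e = (1 / t) *\<^sub>R (ys - x0)"
  shows "quad x0 K e (- L) (c - L / t) (L / t) ys = cone_paraboloid x0 K L c ys"
proof -
  have "ys - x0 = t *\<^sub>R e" and "norm e = 1" using assms by auto
  hence e_ys: "e \<bullet> (ys - x0) = t" and ys_ys: "(ys - x0) \<bullet> (ys - x0) = t\<^sup>2"
    by (simp_all add: dot_square_norm power2_eq_square)
  have "quad x0 K e (- L) (c - L / t) (L / t) ys
      = K - L * t + (c - L / t) * t\<^sup>2 + (L / t) * (t * t)"
    unfolding quad_def e_ys ys_ys by simp
  also have "\<dots> = K - L * t + c * t\<^sup>2"
    using assms(2) by (simp add: field_simps power2_eq_square)
  finally show ?thesis unfolding cone_paraboloid_def assms(1) .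
qed

lemma quad_below_cone:
  assumes t: "t = norm (ys - x0)" "t > 0" and e: "e = (1 / t) *\<^sub>R (ys - x0)"
    and L: "L \<ge> 0" and z: "norm (z - ys) < t / 2"
  shows "quad x0 K e (- L) (c - L / t) (L / t) z \<le> cone_paraboloid x0 K L c z"
proof -
  define n where "n = norm (z - x0)"
  define a where "a = e \<bullet> (z - x0)"
  have ne: "norm e = 1" and ys: "ys - x0 = t *\<^sub>R e" using t e by auto
  have "a = t + e \<bullet> (z - ys)"
  proof -
    have "a = e \<bullet> (ys - x0) + e \<bullet> (z - ys)"
      unfolding a_def by (simp add: inner_diff_right)
    thus ?thesis using ys ne by (simp add: dot_square_norm)
  qed
  moreover have "\<bar>e \<bullet> (z - ys)\<bar> \<le> norm (z - ys)"
    using Cauchy_Schwarz_ineq2[of e "z - ys"] ne by simp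
  ultimately have "2 * a \<ge> t" using z by (simp add: abs_le_iff)
  moreover have "a \<le> n"
    unfolding a_def n_def using norm_cauchy_schwarz[of e "z - x0"] ne by simp
  ultimately have bound: "n \<le> a + (n\<^sup>2 - a\<^sup>2) / t"
    using norm_le_quadratic_bound t(2) by blast
  have "quad x0 K e (- L) (c - L / t) (L / t) z = K - L * (a + (n\<^sup>2 - a\<^sup>2) / t) + c * n\<^sup>2"
    unfolding quad_def a_def[symmetric] n_def using t(2)
    by (simp add: dot_square_norm field_simps power2_eq_square)
  also have "\<dots> \<le> K - L * n + c * n\<^sup>2"
    using bound L by (simp add: mult_left_mono)
  finally show ?thesis unfolding cone_paraboloid_def n_def .
qed

(* If u is a supersolution component (partner v) and u - w has a local minimum at
   ys \<noteq> x0 where the cone is steep enough (2c|ys - x0| < L), then u(ys) - v(ys) >= 2c: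
   the quadratic barrier is an admissible test function with Delta_infty = 2c. *)
lemma cone_touching_from_below:
  fixes U :: "'a::euclidean_space set" and u v :: "'a \<Rightarrow> real"
  assumes sup: "visc_super_comp U u v" and ys: "ys \<in> U"
    and t: "t = norm (ys - x0)" "t > 0" and steep: "2 * c * t < L" "L \<ge> 0"
    and min: "\<exists>r>0. \<forall>z\<in>ball ys r \<inter> U. u z - cone_paraboloid x0 K L c z \<ge> u ys - cone_paraboloid x0 K L c ys"
  shows "2 * c \<le> u ys - v ys"
proof -
  define e where "e = (1 / t) *\<^sub>R (ys - x0)"
  define \<psi> where "\<psi> = quad x0 K e (- L) (c - L / t) (L / t)"
  have ne: "norm e = 1" and ys_x0: "ys - x0 = t *\<^sub>R e" using t unfolding e_def by auto
  obtain r where r: "r > 0" and rmin: "\<forall>z\<in>ball ys r \<inter> U. u z - cone_paraboloid x0 K L c z \<ge> u ys - cone_paraboloid x0 K L c ys"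
    using min by blast
  have "\<forall>z\<in>ball ys (min r (t / 2)) \<inter> U. u z - \<psi> z \<ge> u ys - \<psi> ys"
  proof
    fix z assume z: "z \<in> ball ys (min r (t / 2)) \<inter> U"
    hence "norm (z - ys) < t / 2" by (simp add: dist_norm norm_minus_commute)
    hence "\<psi> z \<le> cone_paraboloid x0 K L c z"
      unfolding \<psi>_def using quad_below_cone[OF t e_def steep(2)] by blast
    moreover have "\<psi> ys = cone_paraboloid x0 K L c ys"
      unfolding \<psi>_def using quad_touches_cone_at[OF t e_def] .
    moreover have "u z - cone_paraboloid x0 K L c z \<ge> u ys - cone_paraboloid x0 K L c ys"
      using rmin z by auto
    ultimately show "u z - \<psi> z \<ge> u ys - \<psi> ys" by linarith
  qed
  hence test: "- inf_lap_minus \<psi> ys + u ys - v ys \<ge> 0"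
    using sup ys r t(2) quad_C2 unfolding visc_super_comp_def \<psi>_def
    by (metis min_less_iff_conj half_gt_zero)
  have grad_\<psi>: "grad (quad x0 K e (- L) (c - L / t) (L / t)) ys = (2 * c * t - L) *\<^sub>R e"
    using t(2) ne unfolding quad_grad ys_x0 by (simp add: algebra_simps dot_square_norm)
  have "2 * c * t - L \<noteq> 0" using steep(1) by simp
  hence "inf_lap_minus \<psi> ys = 2 * (c - L / t) + 2 * (L / t)"
    unfolding \<psi>_def by (rule quad_inf_lap_minus[OF ne grad_\<psi>])
  hence "inf_lap_minus \<psi> ys = 2 * c" by simp
  with test show ?thesis by simp
qed

section \<open>The one-sided cone estimate\<close>

(* One maximizes
   Phi(y) = u(x0) - u(y) - L|y - x0| + c|y - x0|^2 over the ball; a positive maximum can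
   lie neither at x0 nor on the sphere, and in the interior it contradicts the
   touching lemma. *)
lemma cone_estimate:
  fixes U :: "'a::euclidean_space set" and u v :: "'a \<Rightarrow> real"
  assumes sup: "visc_super_comp U u v"
    and bound: "\<forall>x\<in>U. \<bar>u x\<bar> \<le> M" and gap: "\<forall>x\<in>U. u x - v x < 2 * c"
    and cont: "continuous_on U u"
    and R: "R > 0" "cball x0 R \<subseteq> U"
    and large: "2 * M - L * R + c * R\<^sup>2 < 0" "2 * c * R < L" and c: "c > 0"
    and y: "y \<in> cball x0 R"
  shows "u x0 - u y \<le> L * dist x0 y"
proof -
  define \<Phi> where "\<Phi> z = u x0 - u z - L * norm (z - x0) + c * (norm (z - x0))\<^sup>2" for z
  have x0U: "x0 \<in> U" using R by auto
  have "continuous_on (cball x0 R) \<Phi>"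
    unfolding \<Phi>_def using continuous_on_subset[OF cont R(2)] by (intro continuous_intros) auto
  then obtain ys where ys: "ys \<in> cball x0 R" and ysmax: "\<forall>z\<in>cball x0 R. \<Phi> z \<le> \<Phi> ys"
    using continuous_attains_sup[OF compact_cball] R by (metis all_not_in_conv centre_in_cball less_imp_le)
  have ysU: "ys \<in> U" using ys R by auto
  have "\<Phi> ys \<le> 0"
  proof (rule ccontr)
    assume pos: "\<not> \<Phi> ys \<le> 0"
    define t where "t = norm (ys - x0)"
    have "t \<noteq> 0" using pos unfolding \<Phi>_def t_def by auto
    hence tpos: "t > 0" unfolding t_def by simp
    have "t \<noteq> R"
    proof
      assume "t = R"
      hence "\<Phi> ys \<le> 2 * M - L * R + c * R\<^sup>2"
        unfolding \<Phi>_def t_def[symmetric] using bound x0U ysU by (smt (verit))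
      thus False using large(1) pos by simp
    qed
    moreover have "t \<le> R" using ys unfolding t_def by (simp add: dist_norm norm_minus_commute)
    ultimately have tR: "t < R" by simp
    (* Phi has its maximum at ys, i.e. u - cone has a minimum there *)
    have "\<forall>z\<in>ball ys (R - t) \<inter> U.
            u z - cone_paraboloid x0 (u x0 - \<Phi> ys) L c z \<ge> u ys - cone_paraboloid x0 (u x0 - \<Phi> ys) L c ys"
    proof
      fix z assume z: "z \<in> ball ys (R - t) \<inter> U"
      have "norm (z - x0) \<le> norm (ys - x0) + norm (z - ys)"
        using norm_triangle_ineq[of "ys - x0" "z - ys"] by simp
      hence "z \<in> cball x0 R"
        using z unfolding t_def by (simp add: dist_norm norm_minus_commute)
      thus "u z - cone_paraboloid x0 (u x0 - \<Phi> ys) L c z \<ge> u ys - cone_paraboloid x0 (u x0 - \<Phi> ys) L c ys"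
        using ysmax unfolding \<Phi>_def cone_paraboloid_def by force
    qed
    hence touch: "\<exists>r>0. \<forall>z\<in>ball ys r \<inter> U.
            u z - cone_paraboloid x0 (u x0 - \<Phi> ys) L c z \<ge> u ys - cone_paraboloid x0 (u x0 - \<Phi> ys) L c ys"
      using tR by (intro exI[of _ "R - t"]) simp
    have steep: "2 * c * t < L" using tR c large(2) by (smt (verit) mult_strict_left_mono)
    have "L \<ge> 0" using large(2) c R by (smt (verit) mult_pos_pos)
    hence "2 * c \<le> u ys - v ys"
      using cone_touching_from_below[OF sup ysU t_def tpos steep _ touch] by blast
    thus False using gap ysU by fastforce
  qed
  hence "u x0 - u y \<le> L * norm (y - x0) - c * (norm (y - x0))\<^sup>2"
    using ysmax y unfolding \<Phi>_def by force
  also have "\<dots> \<le> L * norm (y - x0)" using c by simp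
  finally show ?thesis by (simp add: dist_norm norm_minus_commute)
qed

(* A bounded continuous supersolution component with u - v bounded above by a
   positive constant is locally Lipschitz: apply the cone estimate in both directions
   on balls of radius R around points of a small ball B(z, R/2). *)
lemma supersolution_locally_lipschitz:
  fixes U :: "'a::euclidean_space set" and u v :: "'a \<Rightarrow> real"
  assumes sup: "visc_super_comp U u v" and U: "open U"
    and bound: "\<forall>x\<in>U. \<bar>u x\<bar> \<le> M" and gap: "\<forall>x\<in>U. u x - v x < 2 * c"
    and cont: "continuous_on U u" and c: "c > 0" and M: "M \<ge> 0"
  shows "locally_lipschitz_in U u"
  unfolding locally_lipschitz_in_def
proof
  fix z assume "z \<in> U"
  then obtain \<epsilon> where \<epsilon>: "\<epsilon> > 0" "cball z \<epsilon> \<subseteq> U" using U open_contains_cball by blast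
  define R where "R = \<epsilon> / 2"
  define L where "L = (2 * M + 1) / R + 3 * c * R + 1"
  have R: "R > 0" unfolding R_def using \<epsilon> by simp
  have "L * R = 2 * M + 1 + 3 * c * R\<^sup>2 + R"
    unfolding L_def using R by (simp add: field_simps power2_eq_square)
  moreover have "c * R\<^sup>2 > 0" using c R by simp
  ultimately have large1: "2 * M - L * R + c * R\<^sup>2 < 0" using R by linarith
  have "(2 * M + 1) / R \<ge> 0" and "c * R > 0" using R M c by simp_all
  hence large2: "2 * c * R < L" and Lpos: "L \<ge> 0" unfolding L_def by linarith+
  have one_sided: "u x - u y \<le> L * dist x y" if "x \<in> ball z (R / 2)" "y \<in> ball z (R / 2)" for x y
  proof (rule cone_estimate[OF sup bound gap cont R _ large1 large2 c])
    show "cball x R \<subseteq> U"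
    proof
      fix w assume "w \<in> cball x R"
      hence "dist z w \<le> \<epsilon>"
        using that(1) dist_triangle[of z w x] \<epsilon>(1) unfolding R_def by (simp add: dist_commute)
      thus "w \<in> U" using \<epsilon>(2) by auto
    qed
    show "y \<in> cball x R"
      using that dist_triangle[of x y z] R by (simp add: dist_commute)
  qed
  show "\<exists>r>0. \<exists>L. ball z r \<subseteq> U \<and> L-lipschitz_on (ball z r) u"
  proof (intro exI conjI)
    show "R / 2 > 0" using R by simp
    show "ball z (R / 2) \<subseteq> U" using \<epsilon> unfolding R_def by auto
    show "L-lipschitz_on (ball z (R / 2)) u"
    proof (rule lipschitz_onI[OF _ Lpos])
      fix x y assume "x \<in> ball z (R / 2)" "y \<in> ball z (R / 2)"
      thus "dist (u x) (u y) \<le> L * dist x y"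
        using one_sided[of x y] one_sided[of y x] by (simp add: dist_real_def dist_commute)
    qed
  qed
qed

(* Both components are bounded on the compact closure of U, so with M a common bound
   and c = M + 1 each is a supersolution component with u_i - u_j < 2c. *)
theorem mainTheorem9:
  fixes U :: "'a::euclidean_space set" and u1 u2 :: "'a \<Rightarrow> real"
  assumes "open U" and "connected U" and "U \<noteq> {}" and "bounded U"
    and "smooth_boundary U"
    and "continuous_on (closure U) u1" and "continuous_on (closure U) u2"
    and "visc_solution U u1 u2"
  shows "locally_lipschitz_in U u1 \<and> locally_lipschitz_in U u2"
proof -
  obtain M1 where M1: "\<forall>x\<in>closure U. \<bar>u1 x\<bar> \<le> M1"
    using compact_imp_bounded[OF compact_continuous_image[OF assms(6)]] assms(4)
    by (auto simp: bounded_real compact_closure)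
  obtain M2 where M2: "\<forall>x\<in>closure U. \<bar>u2 x\<bar> \<le> M2"
    using compact_imp_bounded[OF compact_continuous_image[OF assms(7)]] assms(4)
    by (auto simp: bounded_real compact_closure)
  define M where "M = \<bar>M1\<bar> + \<bar>M2\<bar>"
  have b1: "\<forall>x\<in>U. \<bar>u1 x\<bar> \<le> M" and b2: "\<forall>x\<in>U. \<bar>u2 x\<bar> \<le> M"
    using M1 M2 closure_subset unfolding M_def by (smt (verit) subsetD)+
  have gaps: "\<forall>x\<in>U. u1 x - u2 x < 2 * (M + 1)" "\<forall>x\<in>U. u2 x - u1 x < 2 * (M + 1)"
    using b1 b2 by (smt (verit))+
  have c1: "continuous_on U u1" and c2: "continuous_on U u2"
    using assms(6,7) continuous_on_subset closure_subset by blast+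
  have s1: "visc_super_comp U u1 u2" and s2: "visc_super_comp U u2 u1"
    using assms(8) unfolding visc_solution_def visc_supersolution_def by auto
  have M: "M \<ge> 0" and c: "M + 1 > 0" unfolding M_def by simp_all
  show ?thesis
    using supersolution_locally_lipschitz[OF s1 assms(1) b1 gaps(1) c1 c M]
      supersolution_locally_lipschitz[OF s2 assms(1) b2 gaps(2) c2 c M] by simp
qed

end
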